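(* Let $A, C, D$ be binary random variables, with $A$ taking values $a,\overline{a}$, $C$ taking values $c,\overline{c}$, $D$ taking values $d,\overline{d}$, and let $Y$ be a real random variable with finite expectation. Suppose the joint distribution factorizes as \[ p(A,C,D,Y)=p(D)\,p(C\mid D)\,p(A\mid C)\,p(Y\mid A,C) \] (i.e. $D$ causes $C$, $C$ is a common cause of $A$ and $Y$, and $A$ causes $Y$). Assume that $C$ and $D$ are dependent, and that every event $\{A=x, C=y, D=z\}$ has positive probability. If $E[Y\mid A,D]$ is monotone in $D$, then $E[Y\mid A,C]$ is monotone in $C$.
   Context: $E[Y\mid A,D]$ is called nondecreasing in $D$ if $E[Y\mid a,d]\ge E[Y\mid a,\overline{d}]$ and $E[Y\mid \overline{a},d]\ge E[Y\mid \overline{a},\overline{d}]$; nonincreasing in $D$ if both inequalities are reversed; monotone in $D$ if it is nondecreasing or nonincreasing. The same definitions apply with $C$ in place of $D$. *)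

theory Defs
  imports "HOL-Probability.Probability"
begin

definition ev :: "'w measure \<Rightarrow> ('w \<Rightarrow> bool) \<Rightarrow> 'w set" where
  "ev M P = {w \<in> space M. P w}"

definition cexp :: "'w measure \<Rightarrow> ('w \<Rightarrow> real) \<Rightarrow> ('w \<Rightarrow> bool) \<Rightarrow> real" where
  "cexp M Y P = (\<integral>w. indicator (ev M P) w * Y w \<partial>M) / measure M (ev M P)"

text \<open>For f x z = E[Y | A = x, Z = z], with True encoding a (resp. d), False encoding
  a-bar (resp. d-bar): monotonicity in the second argument, as in the paper.\<close>
definition nondecr_in2 :: "(bool \<Rightarrow> bool \<Rightarrow> real) \<Rightarrow> bool" where
  "nondecr_in2 f \<longleftrightarrow> f True True \<ge> f True False \<and> f False True \<ge> f False False"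

definition nonincr_in2 :: "(bool \<Rightarrow> bool \<Rightarrow> real) \<Rightarrow> bool" where
  "nonincr_in2 f \<longleftrightarrow> f True True \<le> f True False \<and> f False True \<le> f False False"

definition monotone_in2 :: "(bool \<Rightarrow> bool \<Rightarrow> real) \<Rightarrow> bool" where
  "monotone_in2 f \<longleftrightarrow> nondecr_in2 f \<or> nonincr_in2 f"

end

theory Submission
  imports Defs
begin

text \<open>
  Write \<open>g x y = E[Y | A = x, C = y]\<close> and \<open>h x z = E[Y | A = x, D = z]\<close>.
  The factorization of \<open>p(Y | A, C, D)\<close> makes \<open>h x z\<close> a mixture of \<open>g x c\<close> and
  \<open>g x c-bar\<close> with weights \<open>p(A = x, C = y, D = z)\<close>, and a direct computation gives
  \<open>h x d - h x d-bar = (g x c - g x c-bar) * s x\<close>, where \<open>s x\<close> is the determinant of the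
  \<open>(C, D)\<close>-table given \<open>A = x\<close> divided by a positive number. The factorization of
  \<open>p(A | C, D)\<close> says that this table is the \<open>(C, D)\<close>-table with rows rescaled by the
  positive numbers \<open>p(A = x | C = y)\<close>, so \<open>s x\<close> has the sign of the determinant of the
  \<open>(C, D)\<close>-table, which is independent of \<open>x\<close> and nonzero because \<open>C\<close> and \<open>D\<close> are
  dependent. Hence the sign of the \<open>C\<close>-increments of \<open>g\<close> is that of the \<open>D\<close>-increments
  of \<open>h\<close> up to one global sign.
\<close>

lemma sets_ev[measurable]:
  assumes [measurable]: "Measurable.pred M P"
  shows "ev M P \<in> sets M"
  unfolding ev_def by measurable

lemma (in finite_measure) measure_ev_disjoint_union:
  assumes "ev M Q \<in> sets M" "ev M R \<in> sets M"
    and "\<And>w. P w \<longleftrightarrow> Q w \<or> R w" "\<And>w. \<not> (Q w \<and> R w)"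
  shows "measure M (ev M P) = measure M (ev M Q) + measure M (ev M R)"
proof -
  have "ev M P = ev M Q \<union> ev M R" "ev M Q \<inter> ev M R = {}"
    using assms(3,4) by (auto simp: ev_def)
  then show ?thesis
    using assms(1,2) by (simp add: finite_measure_Union)
qed

lemma integral_indicator_ev_disjoint_union:
  fixes Y :: "'w \<Rightarrow> real"
  assumes "integrable M Y" "ev M Q \<in> sets M" "ev M R \<in> sets M"
    and "\<And>w. P w \<longleftrightarrow> Q w \<or> R w" "\<And>w. \<not> (Q w \<and> R w)"
  shows "(\<integral>w. indicator (ev M P) w * Y w \<partial>M)
       = (\<integral>w. indicator (ev M Q) w * Y w \<partial>M) + (\<integral>w. indicator (ev M R) w * Y w \<partial>M)"
proof -
  have "(\<integral>w. indicator (ev M P) w * Y w \<partial>M)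
      = (\<integral>w. indicator (ev M Q) w * Y w + indicator (ev M R) w * Y w \<partial>M)"
    using assms(4,5)
    by (intro Bochner_Integration.integral_cong) (auto simp: ev_def split: split_indicator)
  also have "\<dots> = (\<integral>w. indicator (ev M Q) w * Y w \<partial>M) + (\<integral>w. indicator (ev M R) w * Y w \<partial>M)"
    using assms(1-3) integrable_mult_indicator[of _ M Y]
    by (intro Bochner_Integration.integral_add) auto
  finally show ?thesis .
qed

lemma (in finite_measure) emeasure_distr_density_indicator:
  fixes Y :: "'a \<Rightarrow> real"
  assumes [measurable]: "Y \<in> borel_measurable M" "E \<in> sets M" "B \<in> sets borel" and "k \<ge> 0"
  shows "emeasure (distr (density M (\<lambda>w. ennreal (k * indicator E w))) borel Y) B
       = ennreal (measure M (Y -` B \<inter> E) * k)"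
proof -
  have "Y -` B \<inter> E = (Y -` B \<inter> space M) \<inter> E"
    using sets.sets_into_space[OF assms(2)] by blast
  then have [measurable]: "Y -` B \<inter> E \<in> sets M"
    by simp
  have "emeasure (distr (density M (\<lambda>w. ennreal (k * indicator E w))) borel Y) B
      = (\<integral>\<^sup>+w\<in>Y -` B \<inter> space M. ennreal (k * indicator E w) \<partial>M)"
    by (simp add: emeasure_distr emeasure_density)
  also have "\<dots> = (\<integral>\<^sup>+w. ennreal k * indicator (Y -` B \<inter> E) w \<partial>M)"
    using sets.sets_into_space[OF assms(2)]
    by (intro nn_integral_cong) (auto simp: indicator_def)
  also have "\<dots> = ennreal k * emeasure M (Y -` B \<inter> E)"
    by (simp add: nn_integral_cmult_indicator)
  finally show ?thesis
    using \<open>k \<ge> 0\<close> by (simp add: emeasure_eq_measure ennreal_mult mult.commute)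
qed

lemma integral_distr_density_indicator:
  fixes Y :: "'a \<Rightarrow> real"
  assumes "Y \<in> borel_measurable M" "E \<in> sets M" "k \<ge> 0"
  shows "(\<integral>y. y \<partial>distr (density M (\<lambda>w. ennreal (k * indicator E w))) borel Y)
       = (\<integral>w. indicator E w * Y w \<partial>M) * k"
proof -
  have "(\<integral>y. y \<partial>distr (density M (\<lambda>w. ennreal (k * indicator E w))) borel Y)
      = (\<integral>w. (k * indicator E w) *\<^sub>R Y w \<partial>M)"
    using assms by (simp add: integral_distr integral_density)
  also have "\<dots> = k * (\<integral>w. indicator E w * Y w \<partial>M)"
    by (simp add: mult.assoc)
  finally show ?thesis
    by simp
qed

text \<open>Both sides are the mean of the image under \<open>Y\<close> of the measure with density
  \<open>k\<^sub>i \<cdot> 1\<^bsub>E\<^sub>i\<^esub>\<close>, and the hypothesis says that these two image measures coincide.\<close>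

lemma (in finite_measure) integral_indicator_mult_eq_if_measure_preimage_eq:
  fixes Y :: "'a \<Rightarrow> real"
  assumes "Y \<in> borel_measurable M" "E\<^sub>1 \<in> sets M" "E\<^sub>2 \<in> sets M" "k\<^sub>1 \<ge> 0" "k\<^sub>2 \<ge> 0"
    and "\<And>B. B \<in> sets borel \<Longrightarrow> measure M (Y -` B \<inter> E\<^sub>1) * k\<^sub>1 = measure M (Y -` B \<inter> E\<^sub>2) * k\<^sub>2"
  shows "(\<integral>w. indicator E\<^sub>1 w * Y w \<partial>M) * k\<^sub>1 = (\<integral>w. indicator E\<^sub>2 w * Y w \<partial>M) * k\<^sub>2"
proof -
  have "distr (density M (\<lambda>w. ennreal (k\<^sub>1 * indicator E\<^sub>1 w))) borel Y
      = distr (density M (\<lambda>w. ennreal (k\<^sub>2 * indicator E\<^sub>2 w))) borel Y"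
    by (rule measure_eqI) (simp_all add: assms emeasure_distr_density_indicator)
  then show ?thesis
    using integral_distr_density_indicator[OF assms(1,2,4)]
      integral_distr_density_indicator[OF assms(1,3,5)]
    by simp
qed

lemma weighted_mean_diff:
  fixes u v p q r s :: real
  assumes "p + r \<noteq> 0" "q + s \<noteq> 0"
  shows "(u * p + v * r) / (p + r) - (u * q + v * s) / (q + s)
       = (u - v) * ((p * s - q * r) / ((p + r) * (q + s)))"
  using assms by (simp add: field_simps)

lemma product_table_if_det_eq_0:
  fixes p :: "bool \<Rightarrow> bool \<Rightarrow> real"
  assumes total: "p True True + p True False + p False True + p False False = 1"
    and det: "p True True * p False False = p True False * p False True"
  shows "p y z = (p y True + p y False) * (p True z + p False z)"
proof -
  have "p y z = p y z * (p True True + p True False + p False True + p False False)"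
    using total by simp
  also have "\<dots> = (p y True + p y False) * (p True z + p False z)"
    using det by (cases y; cases z) (simp_all add: algebra_simps)
  finally show ?thesis .
qed

lemma monotone_in2_if_diff_scaled:
  fixes f g :: "bool \<Rightarrow> bool \<Rightarrow> real" and s :: "bool \<Rightarrow> real"
  assumes "c \<noteq> 0"
    and sign: "\<And>x. sgn (s x) = sgn c"
    and diff: "\<And>x. f x True - f x False = (g x True - g x False) * s x"
    and "monotone_in2 f"
  shows "monotone_in2 g"
proof -
  have sgn_diff: "sgn (f x True - f x False) = sgn (g x True - g x False) * sgn c" for x
    by (simp add: diff sgn_mult sign)
  from \<open>c \<noteq> 0\<close> consider "c > 0" | "c < 0"
    by linarith
  then show ?thesis
  proof cases
    case 1
    then have "sgn (f x True - f x False) = sgn (g x True - g x False)" for x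
      using sgn_diff by simp
    then show ?thesis
      using \<open>monotone_in2 f\<close> unfolding monotone_in2_def nondecr_in2_def nonincr_in2_def
      by (smt (verit) sgn_if)
  next
    case 2
    then have "sgn (f x True - f x False) = - sgn (g x True - g x False)" for x
      using sgn_diff by simp
    then show ?thesis
      using \<open>monotone_in2 f\<close> unfolding monotone_in2_def nondecr_in2_def nonincr_in2_def
      by (smt (verit) sgn_if)
  qed
qed

text \<open>The causal graph \<open>D \<rightarrow> C \<rightarrow> A \<rightarrow> Y\<close>, \<open>C \<rightarrow> Y\<close>: \<open>A_factor\<close> is
  \<open>p(A | C, D) = p(A | C)\<close> and \<open>Y_factor\<close> is \<open>p(Y | A, C, D) = p(Y | A, C)\<close>, both with the
  denominators cleared.\<close>

locale confounder_proxy_model = prob_space M for M :: "'w measure" +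
  fixes A C D :: "'w \<Rightarrow> bool" and Y :: "'w \<Rightarrow> real"
  assumes A_measurable[measurable]: "A \<in> M \<rightarrow>\<^sub>M count_space UNIV"
    and C_measurable[measurable]: "C \<in> M \<rightarrow>\<^sub>M count_space UNIV"
    and D_measurable[measurable]: "D \<in> M \<rightarrow>\<^sub>M count_space UNIV"
    and Y_integrable: "integrable M Y"
    and A_factor: "\<And>x y z.
       measure M (ev M (\<lambda>w. A w = x \<and> C w = y \<and> D w = z)) * measure M (ev M (\<lambda>w. C w = y))
     = measure M (ev M (\<lambda>w. A w = x \<and> C w = y)) * measure M (ev M (\<lambda>w. C w = y \<and> D w = z))"
    and Y_factor: "\<And>B x y z. B \<in> sets borel \<Longrightarrow>
       measure M (ev M (\<lambda>w. Y w \<in> B \<and> A w = x \<and> C w = y \<and> D w = z))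
         * measure M (ev M (\<lambda>w. A w = x \<and> C w = y))
     = measure M (ev M (\<lambda>w. Y w \<in> B \<and> A w = x \<and> C w = y))
         * measure M (ev M (\<lambda>w. A w = x \<and> C w = y \<and> D w = z))"
    and positive: "\<And>x y z. measure M (ev M (\<lambda>w. A w = x \<and> C w = y \<and> D w = z)) > 0"
begin

abbreviation "p_ACD x y z \<equiv> measure M (ev M (\<lambda>w. A w = x \<and> C w = y \<and> D w = z))"
abbreviation "p_AC x y \<equiv> measure M (ev M (\<lambda>w. A w = x \<and> C w = y))"
abbreviation "p_AD x z \<equiv> measure M (ev M (\<lambda>w. A w = x \<and> D w = z))"
abbreviation "p_CD y z \<equiv> measure M (ev M (\<lambda>w. C w = y \<and> D w = z))"
abbreviation "p_C y \<equiv> measure M (ev M (\<lambda>w. C w = y))"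
abbreviation "p_D z \<equiv> measure M (ev M (\<lambda>w. D w = z))"
abbreviation "E_AC x y \<equiv> cexp M Y (\<lambda>w. A w = x \<and> C w = y)"
abbreviation "E_AD x z \<equiv> cexp M Y (\<lambda>w. A w = x \<and> D w = z)"
abbreviation "det_ACD x \<equiv>
  p_ACD x True True * p_ACD x False False - p_ACD x True False * p_ACD x False True"
abbreviation "det_CD \<equiv> p_CD True True * p_CD False False - p_CD True False * p_CD False True"

lemma p_AC_split: "p_AC x y = p_ACD x y True + p_ACD x y False"
  by (rule measure_ev_disjoint_union) auto

lemma p_AD_split: "p_AD x z = p_ACD x True z + p_ACD x False z"
  by (rule measure_ev_disjoint_union) auto

lemma p_CD_split: "p_CD y z = p_ACD True y z + p_ACD False y z"
  by (rule measure_ev_disjoint_union) auto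

lemma p_C_split: "p_C y = p_CD y True + p_CD y False"
  by (rule measure_ev_disjoint_union) auto

lemma p_D_split: "p_D z = p_CD True z + p_CD False z"
  by (rule measure_ev_disjoint_union) auto

lemma p_CD_total: "p_CD True True + p_CD True False + p_CD False True + p_CD False False = 1"
proof -
  have "p_C True + p_C False = measure M (ev M (\<lambda>w. True))"
    by (rule measure_ev_disjoint_union[symmetric]) auto
  also have "\<dots> = 1"
    by (simp add: ev_def prob_space)
  finally show ?thesis
    unfolding p_C_split by linarith
qed

lemma p_AC_pos: "p_AC x y > 0"
  using positive[of x y True] positive[of x y False] unfolding p_AC_split by linarith

lemma p_AD_pos: "p_AD x z > 0"
  using positive[of x True z] positive[of x False z] unfolding p_AD_split by linarith

lemma p_C_pos: "p_C y > 0"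
  using positive[of _ y] unfolding p_C_split p_CD_split by (intro add_pos_pos)

lemma integral_ACD_eq:
  "(\<integral>w. indicator (ev M (\<lambda>w. A w = x \<and> C w = y \<and> D w = z)) w * Y w \<partial>M)
   = E_AC x y * p_ACD x y z"
proof -
  have "(\<integral>w. indicator (ev M (\<lambda>w. A w = x \<and> C w = y \<and> D w = z)) w * Y w \<partial>M) * p_AC x y
      = (\<integral>w. indicator (ev M (\<lambda>w. A w = x \<and> C w = y)) w * Y w \<partial>M) * p_ACD x y z"
  proof (rule integral_indicator_mult_eq_if_measure_preimage_eq)
    fix B :: "real set"
    assume "B \<in> sets borel"
    moreover have "Y -` B \<inter> ev M (\<lambda>w. A w = x \<and> C w = y \<and> D w = z)
        = ev M (\<lambda>w. Y w \<in> B \<and> A w = x \<and> C w = y \<and> D w = z)"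
      "Y -` B \<inter> ev M (\<lambda>w. A w = x \<and> C w = y) = ev M (\<lambda>w. Y w \<in> B \<and> A w = x \<and> C w = y)"
      by (auto simp: ev_def)
    ultimately show "measure M (Y -` B \<inter> ev M (\<lambda>w. A w = x \<and> C w = y \<and> D w = z)) * p_AC x y
        = measure M (Y -` B \<inter> ev M (\<lambda>w. A w = x \<and> C w = y)) * p_ACD x y z"
      by (simp add: Y_factor)
  qed (use Y_integrable in auto)
  then show ?thesis
    using p_AC_pos[of x y] by (simp add: cexp_def field_simps)
qed

lemma E_AD_eq_mixture:
  "E_AD x z = (E_AC x True * p_ACD x True z + E_AC x False * p_ACD x False z) / p_AD x z"
proof -
  have "E_AD x z = (\<integral>w. indicator (ev M (\<lambda>w. A w = x \<and> D w = z)) w * Y w \<partial>M) / p_AD x z"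
    by (simp add: cexp_def)
  also have "\<dots> = ((\<integral>w. indicator (ev M (\<lambda>w. A w = x \<and> C w = True \<and> D w = z)) w * Y w \<partial>M)
      + (\<integral>w. indicator (ev M (\<lambda>w. A w = x \<and> C w = False \<and> D w = z)) w * Y w \<partial>M)) / p_AD x z"
    by (intro arg_cong2[where f = "(/)"] integral_indicator_ev_disjoint_union Y_integrable) auto
  finally show ?thesis
    by (simp only: integral_ACD_eq)
qed

lemma E_AD_diff_eq:
  "E_AD x True - E_AD x False
   = (E_AC x True - E_AC x False) * (det_ACD x / (p_AD x True * p_AD x False))"
  using p_AD_pos[of x True] p_AD_pos[of x False]
  unfolding E_AD_eq_mixture p_AD_split by (intro weighted_mean_diff) auto

text \<open>Given \<open>A = x\<close>, the \<open>(C, D)\<close>-table is the \<open>(C, D)\<close>-table with row \<open>y\<close> rescaled by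
  \<open>p(A = x | C = y) > 0\<close>.\<close>

lemma sgn_det_ACD: "sgn (det_ACD x) = sgn det_CD"
proof -
  have "det_ACD x * (p_C True * p_C False)
      = (p_ACD x True True * p_C True) * (p_ACD x False False * p_C False)
        - (p_ACD x True False * p_C True) * (p_ACD x False True * p_C False)"
    by (simp only: algebra_simps)
  also have "\<dots> = (p_AC x True * p_AC x False) * det_CD"
    unfolding A_factor by (simp only: algebra_simps)
  finally have "sgn (det_ACD x) * sgn (p_C True * p_C False)
      = sgn (p_AC x True * p_AC x False) * sgn det_CD"
    by (simp only: sgn_mult[symmetric])
  then show ?thesis
    using p_C_pos[of True] p_C_pos[of False] p_AC_pos[of x True] p_AC_pos[of x False]
    by (simp add: sgn_mult)
qed

lemma det_CD_neq_0:
  assumes "\<not> (\<forall>y z. p_CD y z = p_C y * p_D z)"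
  shows "det_CD \<noteq> 0"
proof
  assume "det_CD = 0"
  then have "p_CD y z = p_C y * p_D z" for y z
    unfolding p_C_split p_D_split
    by (intro product_table_if_det_eq_0[where p = "\<lambda>y z. p_CD y z"] p_CD_total) simp
  with assms show False
    by blast
qed

end

theorem theorem6:
  fixes M :: "'w measure" and A C D :: "'w \<Rightarrow> bool" and Y :: "'w \<Rightarrow> real"
  assumes "prob_space M"
    and "A \<in> M \<rightarrow>\<^sub>M count_space UNIV"
    and "C \<in> M \<rightarrow>\<^sub>M count_space UNIV"
    and "D \<in> M \<rightarrow>\<^sub>M count_space UNIV"
    and "Y \<in> borel_measurable M"
    and "integrable M Y"
    \<comment> \<open>factorization p(A,C,D,Y) = p(D) p(C|D) p(A|C) p(Y|A,C):\<close>
    and fact_A: "\<forall>x y z.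
       measure M (ev M (\<lambda>w. A w = x \<and> C w = y \<and> D w = z)) * measure M (ev M (\<lambda>w. C w = y))
     = measure M (ev M (\<lambda>w. A w = x \<and> C w = y)) * measure M (ev M (\<lambda>w. C w = y \<and> D w = z))"
    and fact_Y: "\<forall>B \<in> sets borel. \<forall>x y z.
       measure M (ev M (\<lambda>w. Y w \<in> B \<and> A w = x \<and> C w = y \<and> D w = z))
         * measure M (ev M (\<lambda>w. A w = x \<and> C w = y))
     = measure M (ev M (\<lambda>w. Y w \<in> B \<and> A w = x \<and> C w = y))
         * measure M (ev M (\<lambda>w. A w = x \<and> C w = y \<and> D w = z))"
    and dependent: "\<not> (\<forall>y z. measure M (ev M (\<lambda>w. C w = y \<and> D w = z))
                        = measure M (ev M (\<lambda>w. C w = y)) * measure M (ev M (\<lambda>w. D w = z)))"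
    and positive: "\<forall>x y z. measure M (ev M (\<lambda>w. A w = x \<and> C w = y \<and> D w = z)) > 0"
    and mono_D: "monotone_in2 (\<lambda>x z. cexp M Y (\<lambda>w. A w = x \<and> D w = z))"
  shows "monotone_in2 (\<lambda>x y. cexp M Y (\<lambda>w. A w = x \<and> C w = y))"
proof -
  interpret confounder_proxy_model M A C D Y
    using assms unfolding confounder_proxy_model_def confounder_proxy_model_axioms_def by blast
  have "det_CD \<noteq> 0"
    using dependent by (rule det_CD_neq_0)
  moreover have "sgn (det_ACD x / (p_AD x True * p_AD x False)) = sgn det_CD" for x
    by (simp only: sgn_divide sgn_mult sgn_det_ACD sgn_pos[OF p_AD_pos] mult_1_right div_by_1)
  ultimately show ?thesis
    using E_AD_diff_eq mono_D by (rule monotone_in2_if_diff_scaled)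
qed

end
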